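(* Let $G=(V,E,w)$ be a weighted undirected connected graph with $n$ vertices and $m$ edges, and let $\Pi_G=U\Sigma V^T$ be a thin SVD of its edge-vertex incidence matrix with $U\in\mathbb{R}^{n\times(n-1)}$, $\Sigma\in\mathbb{R}^{(n-1)\times(n-1)}$, $V\in\mathbb{R}^{m\times(n-1)}$, and let $Y=V^T$. Then: (1) if $T$ is a spanning tree of $G$, then $\mathrm{St}_T(G)=\|Y_{\mathcal S(T)}^{-1}\|_F^2$; (2) if $\mathcal S\subseteq[m]$ has cardinality $n-1$ and $Y_{\mathcal S}$ has full rank, then $H(\mathcal S)$ is a spanning tree of $G$.
   Context: Let $V=\{1,\dots,n\}$, $E=\{(u_1,v_1),\dots,(u_m,v_m)\}$, with positive weights $w$. The edge-vertex incidence matrix $\Pi_G\in\mathbb{R}^{n\times m}$ has $i$-th column $\sqrt{w(u_i,v_i)}(e_{u_i}-e_{v_i})$, where $e_j$ are standard basis vectors; since $G$ is connected, $\mathrm{rank}(\Pi_G)=n-1$. For a set of edges (e.g. of a spanning tree $T$), $\mathcal S(T)\subseteq[m]$ is the set of indices of its edges; for $\mathcal S\subseteq[m]$, $H(\mathcal S)$ is the subgraph of $G$ on vertex set $V$ with the edges indexed by $\mathcal S$. $Y_{\mathcal S}$ is the submatrix of columns of $Y$ indexed by $\mathcal S$. For a spanning tree $T$ and edge $e\in E$, let $p_T(e)$ be the set of edges on the unique path in $T$ between the endpoints of $e$; the stretch of $e$ is $\mathrm{St}_T(e)=\sum_{e'\in p_T(e)}w(e)/w(e')$, and $\mathrm{St}_T(G)=\sum_{e\in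 E}\mathrm{St}_T(e)$. $\|\cdot\|_F$ is the Frobenius norm. *)

theory Defs
  imports "Jordan_Normal_Form.DL_Rank" "Jordan_Normal_Form.DL_Submatrix"
begin

text \<open>Graph on vertex set {0..<n}; edges indexed by {0..<m}; edge i has endpoints
  ends i = (u_i, v_i) and weight w i.\<close>

definition incidence_mat :: "nat \<Rightarrow> nat \<Rightarrow> (nat \<Rightarrow> nat \<times> nat) \<Rightarrow> (nat \<Rightarrow> real) \<Rightarrow> real mat" where
  "incidence_mat n m ends w = mat n m (\<lambda>(r, i). sqrt (w i) *
      ((if r = fst (ends i) then 1 else 0) - (if r = snd (ends i) then 1 else 0)))"

fun walk :: "(nat \<Rightarrow> nat \<times> nat) \<Rightarrow> nat set \<Rightarrow> nat list \<Rightarrow> nat list \<Rightarrow> bool" where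
  "walk ends S [v] [] = True"
| "walk ends S (u # x # vs) (i # es) =
     (i \<in> S \<and> (ends i = (u, x) \<or> ends i = (x, u)) \<and> walk ends S (x # vs) es)"
| "walk ends S _ _ = False"

definition is_path :: "(nat \<Rightarrow> nat \<times> nat) \<Rightarrow> nat set \<Rightarrow> nat \<Rightarrow> nat \<Rightarrow> nat list \<Rightarrow> nat list \<Rightarrow> bool" where
  "is_path ends S u v vs es \<longleftrightarrow> walk ends S vs es \<and> hd vs = u \<and> last vs = v \<and> distinct vs"

definition is_cycle :: "(nat \<Rightarrow> nat \<times> nat) \<Rightarrow> nat set \<Rightarrow> nat list \<Rightarrow> nat list \<Rightarrow> bool" where
  "is_cycle ends S vs es \<longleftrightarrow> walk ends S vs es \<and> es \<noteq> [] \<and> hd vs = last vs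
      \<and> distinct es \<and> distinct (tl vs)"

definition connected_on :: "nat \<Rightarrow> (nat \<Rightarrow> nat \<times> nat) \<Rightarrow> nat set \<Rightarrow> bool" where
  "connected_on n ends S \<longleftrightarrow> (\<forall>u<n. \<forall>v<n. \<exists>vs es. is_path ends S u v vs es)"

definition acyclic_on :: "(nat \<Rightarrow> nat \<times> nat) \<Rightarrow> nat set \<Rightarrow> bool" where
  "acyclic_on ends S \<longleftrightarrow> \<not> (\<exists>vs es. is_cycle ends S vs es)"

definition is_spanning_tree :: "nat \<Rightarrow> nat \<Rightarrow> (nat \<Rightarrow> nat \<times> nat) \<Rightarrow> nat set \<Rightarrow> bool" where
  "is_spanning_tree n m ends S \<longleftrightarrow> S \<subseteq> {..<m} \<and> connected_on n ends S \<and> acyclic_on ends S"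

definition tree_path :: "(nat \<Rightarrow> nat \<times> nat) \<Rightarrow> nat set \<Rightarrow> nat \<Rightarrow> nat \<Rightarrow> nat set" where
  "tree_path ends S u v = (THE P. \<exists>vs es. is_path ends S u v vs es \<and> P = set es)"

definition stretch_edge :: "(nat \<Rightarrow> nat \<times> nat) \<Rightarrow> (nat \<Rightarrow> real) \<Rightarrow> nat set \<Rightarrow> nat \<Rightarrow> real" where
  "stretch_edge ends w S i = (\<Sum>j\<in>tree_path ends S (fst (ends i)) (snd (ends i)). w i / w j)"

definition stretch :: "nat \<Rightarrow> (nat \<Rightarrow> nat \<times> nat) \<Rightarrow> (nat \<Rightarrow> real) \<Rightarrow> nat set \<Rightarrow> real" where
  "stretch m ends w S = (\<Sum>i<m. stretch_edge ends w S i)"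

definition diagonal_nonneg :: "real mat \<Rightarrow> bool" where
  "diagonal_nonneg D \<longleftrightarrow> (\<forall>i<dim_row D. \<forall>j<dim_col D. i \<noteq> j \<longrightarrow> D $$ (i, j) = 0)
      \<and> (\<forall>i<dim_row D. i < dim_col D \<longrightarrow> D $$ (i, i) \<ge> 0)"

definition thin_svd :: "real mat \<Rightarrow> nat \<Rightarrow> real mat \<Rightarrow> real mat \<Rightarrow> real mat \<Rightarrow> bool" where
  "thin_svd A k U Sig V \<longleftrightarrow>
     U \<in> carrier_mat (dim_row A) k \<and> Sig \<in> carrier_mat k k \<and> V \<in> carrier_mat (dim_col A) k \<and>
     transpose_mat U * U = 1\<^sub>m k \<and> transpose_mat V * V = 1\<^sub>m k \<and> diagonal_nonneg Sig \<and>
     A = U * Sig * transpose_mat V"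

text \<open>Y_S: columns of Y indexed by S (in increasing order).\<close>
definition col_submat :: "real mat \<Rightarrow> nat set \<Rightarrow> real mat" where
  "col_submat Y S = submatrix Y {..<dim_row Y} S"

definition mat_inv :: "real mat \<Rightarrow> real mat" where
  "mat_inv A = (SOME B. inverts_mat A B \<and> inverts_mat B A)"

definition frob_sq :: "real mat \<Rightarrow> real" where
  "frob_sq A = (\<Sum>i<dim_row A. \<Sum>j<dim_col A. (A $$ (i, j))\<^sup>2)"

end

theory Submission
  imports Defs
begin

text \<open>Write P for the incidence matrix, so that P = U Sig Y. A walk from u to v inside an edge set S
  carries a flow, supported on S with entries +-1/sqrt(w j) on its edges, which P maps to e_u - e_v.
  As G is connected these vectors span the (n-1)-dimensional range of P, so Sig is invertible and
  P x = 0 iff Y x = 0. A vector supported on an acyclic edge set and killed by P vanishes (balance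
  at an end of a longest path in its support), while a cycle supports a nonzero such vector; hence
  Y_S is injective iff S is acyclic, and it is square when S is a spanning tree. Column i of
  Y_S^-1 Y is then sqrt(w i) times the flow of the tree path between the endpoints of edge i, whose
  squared norm is the stretch of edge i, and right multiplication by Y, whose rows are orthonormal,
  preserves the Frobenius norm. Conversely, if Y_S is invertible then S is acyclic, and every flow
  of G has the same image under Y, hence under P, as a vector supported on S, which forces S to
  connect all vertices.\<close>

section \<open>Walks, paths and cycles\<close>

lemma walk_Cons_iff:
  "walk ends S (u # vs) (i # es) \<longleftrightarrow>
     i \<in> S \<and> vs \<noteq> [] \<and> (ends i = (u, hd vs) \<or> ends i = (hd vs, u)) \<and> walk ends S vs es"
  by (cases vs) auto

lemma walk_singleton_iff [simp]: "walk ends S [v] es \<longleftrightarrow> es = []"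
  by (cases es) auto

lemma walk_Nil_iff: "walk ends S vs [] \<longleftrightarrow> (\<exists>v. vs = [v])"
  by (cases vs) (auto elim: walk.elims)

lemma walk_length: "walk ends S vs es \<Longrightarrow> length vs = Suc (length es)"
  by (induction ends S vs es rule: walk.induct) auto

lemma walk_nth:
  "walk ends S vs es \<Longrightarrow> t < length es \<Longrightarrow>
     es ! t \<in> S \<and> (ends (es ! t) = (vs ! t, vs ! Suc t) \<or> ends (es ! t) = (vs ! Suc t, vs ! t))"
proof (induction ends S vs es arbitrary: t rule: walk.induct)
  case (2 ends S u x vs i es)
  then show ?case by (cases t) auto
qed auto

lemma walk_edges_subset: "walk ends S vs es \<Longrightarrow> set es \<subseteq> S"
  by (induction ends S vs es rule: walk.induct) auto

lemma walk_mono: "walk ends S vs es \<Longrightarrow> S \<subseteq> T \<Longrightarrow> walk ends T vs es"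
  by (induction ends S vs es rule: walk.induct) auto

lemma walk_take:
  "walk ends S vs es \<Longrightarrow> t \<le> length es \<Longrightarrow> walk ends S (take (Suc t) vs) (take t es)"
proof (induction ends S vs es arbitrary: t rule: walk.induct)
  case (2 ends S u x vs i es)
  then show ?case by (cases t) (auto simp: walk_Cons_iff)
qed auto

lemma walk_drop: "walk ends S vs es \<Longrightarrow> t \<le> length es \<Longrightarrow> walk ends S (drop t vs) (drop t es)"
proof (induction ends S vs es arbitrary: t rule: walk.induct)
  case (2 ends S u x vs i es)
  then show ?case by (cases t) auto
qed auto

lemma walk_vertices_less:
  assumes "walk ends S vs es" "es \<noteq> []" "\<And>i. i \<in> S \<Longrightarrow> fst (ends i) < n \<and> snd (ends i) < n"
  shows "set vs \<subseteq> {..<n}"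
  using assms
proof (induction ends S vs es rule: walk.induct)
  case (2 ends S u x vs i es)
  then have "u < n \<and> x < n" by (metis fst_conv snd_conv walk.simps(2))
  with 2 show ?case by (cases es) (auto simp: walk_Nil_iff)
qed auto

lemma walk_distinct_edges:
  assumes wk: "walk ends S vs es" and d: "distinct vs"
  shows "distinct es"
  unfolding distinct_conv_nth
proof (intro allI impI)
  fix a b assume ab: "a < length es" "b < length es" "a \<noteq> b"
  have L: "length vs = Suc (length es)" using walk_length[OF wk] .
  show "es ! a \<noteq> es ! b"
  proof
    assume eq: "es ! a = es ! b"
    then have "vs ! a = vs ! b \<or> vs ! a = vs ! Suc b" "vs ! Suc a = vs ! b \<or> vs ! Suc a = vs ! Suc b"
      using walk_nth[OF wk ab(1)] walk_nth[OF wk ab(2)] by auto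
    then show False using d ab L by (auto simp: nth_eq_iff_index_eq)
  qed
qed

lemma path_Cons_edge:
  assumes p: "is_path ends S a v vs es" and j: "j \<in> S" "ends j = (a, b) \<or> ends j = (b, a)"
  shows "\<exists>vs' es'. is_path ends S b v vs' es'"
proof -
  have wk: "walk ends S vs es" and h: "hd vs = a" "last vs = v" and d: "distinct vs"
    using p unfolding is_path_def by auto
  show ?thesis
  proof (cases "b \<in> set vs")
    case True
    then obtain t where t: "t < length vs" "vs ! t = b" by (auto simp: in_set_conv_nth)
    then have "walk ends S (drop t vs) (drop t es)" using walk_drop[OF wk] walk_length[OF wk] by simp
    moreover have "hd (drop t vs) = b" "last (drop t vs) = v" using t h by (auto simp: hd_drop_conv_nth)
    ultimately show ?thesis using d unfolding is_path_def by (metis distinct_drop)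
  next
    case False
    have "vs \<noteq> []" using walk_length[OF wk] by auto
    then have "is_path ends S b v (b # vs) (j # es)"
      using wk d j h False by (auto simp: is_path_def walk_Cons_iff)
    then show ?thesis by blast
  qed
qed

lemma cycle_of_chord:
  assumes wk: "walk ends S vs es" and d: "distinct vs" and t: "0 < t" "t < length vs"
    and j: "j \<in> S" "ends j = (hd vs, vs ! t) \<or> ends j = (vs ! t, hd vs)" "j \<noteq> hd es"
  shows "is_cycle ends S (vs ! t # take (Suc t) vs) (j # take t es)"
proof -
  have L: "length vs = Suc (length es)" using walk_length[OF wk] .
  have ne: "vs \<noteq> []" using t by auto
  have j_new: "j \<notin> set (take t es)"
  proof
    assume "j \<in> set (take t es)"
    then obtain s where s: "s < length es" "es ! s = j" by (auto simp: in_set_conv_nth dest: in_set_takeD)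
    then have "hd vs = vs ! s \<or> hd vs = vs ! Suc s" using walk_nth[OF wk s(1)] j(2) by auto
    then have "s = 0" using d L s(1) ne by (auto simp: hd_conv_nth nth_eq_iff_index_eq)
    then show False using s j(3) by (simp add: hd_conv_nth)
  qed
  have "walk ends S (take (Suc t) vs) (take t es)" using walk_take[OF wk] t L by simp
  moreover have "hd (take (Suc t) vs) = hd vs" "last (take (Suc t) vs) = vs ! t"
    using t ne by (auto simp: take_Suc_conv_app_nth)
  moreover have "distinct (take t es)" using walk_distinct_edges[OF wk d] by simp
  ultimately show ?thesis
    using j j_new d ne unfolding is_cycle_def by (auto simp: walk_Cons_iff)
qed

section \<open>Incidence matrix and walk flows\<close>

definition incidence_entry ::
    "(nat \<Rightarrow> nat \<times> nat) \<Rightarrow> (nat \<Rightarrow> real) \<Rightarrow> nat \<Rightarrow> nat \<Rightarrow> real" where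
  "incidence_entry ends w r i =
     sqrt (w i) * ((if r = fst (ends i) then 1 else 0) - (if r = snd (ends i) then 1 else 0))"

definition unit_diff :: "nat \<Rightarrow> nat \<Rightarrow> nat \<Rightarrow> real vec" where
  "unit_diff n u v = vec n (\<lambda>r. (if r = u then 1 else 0) - (if r = v then 1 else 0))"

text \<open>Scaled so that the incidence matrix maps the flow of a walk from u to v to e_u - e_v.\<close>
fun walk_flow ::
    "(nat \<Rightarrow> nat \<times> nat) \<Rightarrow> (nat \<Rightarrow> real) \<Rightarrow> nat list \<Rightarrow> nat list \<Rightarrow> nat \<Rightarrow> real" where
  "walk_flow ends w (u # x # vs) (i # es) =
     (\<lambda>j. (if j = i then (if ends i = (u, x) then 1 else -1) / sqrt (w i) else 0)
          + walk_flow ends w (x # vs) es j)"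
| "walk_flow ends w _ _ = (\<lambda>j. 0)"

lemma walk_flow_outside: "j \<notin> set es \<Longrightarrow> walk_flow ends w vs es j = 0"
  by (induction ends w vs es rule: walk_flow.induct) auto

lemma walk_flow_sq:
  assumes "walk ends S vs es" "distinct es" "j \<in> set es" "w j > 0"
  shows "(walk_flow ends w vs es j)\<^sup>2 = 1 / w j"
  using assms
proof (induction ends w vs es rule: walk_flow.induct)
  case (1 ends w u x vs i es)
  show ?case
  proof (cases "j = i")
    case True
    then have "walk_flow ends w (x # vs) es j = 0" using 1 by (intro walk_flow_outside) auto
    then show ?thesis using True 1(5) by (auto simp: power_divide)
  qed (use 1 in auto)
qed auto

lemma sum_mult_unit_diff:
  fixes g :: "nat \<Rightarrow> real"
  assumes "u < n" "v < n"
  shows "(\<Sum>r<n. g r * ((if r = u then 1 else 0) - (if r = v then 1 else 0))) = g u - g v"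
proof -
  have "(\<Sum>r<n. g r * ((if r = u then 1 else 0) - (if r = v then 1 else 0)))
      = (\<Sum>r<n. (if r = u then g r else 0) - (if r = v then g r else 0))"
    by (intro sum.cong) auto
  also have "\<dots> = (\<Sum>r<n. if r = u then g r else 0) - (\<Sum>r<n. if r = v then g r else 0)"
    by (rule sum_subtractf)
  also have "\<dots> = g u - g v" using assms by (simp add: sum.delta)
  finally show ?thesis .
qed

lemma sum_mult_incidence_entry:
  fixes g :: "nat \<Rightarrow> real"
  assumes "fst (ends j) < n" "snd (ends j) < n"
  shows "(\<Sum>r<n. g r * incidence_entry ends w r j) = sqrt (w j) * (g (fst (ends j)) - g (snd (ends j)))"
proof -
  have "(\<Sum>r<n. g r * incidence_entry ends w r j) = sqrt (w j) *
      (\<Sum>r<n. g r * ((if r = fst (ends j) then 1 else 0) - (if r = snd (ends j) then 1 else 0)))"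
    unfolding incidence_entry_def sum_distrib_left by (intro sum.cong) auto
  then show ?thesis using sum_mult_unit_diff[OF assms] by simp
qed

lemma sum_walk_flow_incidence:
  assumes "walk ends S vs es" "finite J" "set es \<subseteq> J" "\<forall>j\<in>set es. w j > 0"
  shows "(\<Sum>j\<in>J. walk_flow ends w vs es j * incidence_entry ends w r j) =
           (if r = hd vs then 1 else 0) - (if r = last vs then 1 else 0)"
  using assms
proof (induction ends w vs es rule: walk_flow.induct)
  case (1 ends w u x vs i es)
  have i: "i \<in> J" "sqrt (w i) > 0" and e: "ends i = (u, x) \<or> ends i = (x, u)" using 1 by auto
  have step: "(if ends i = (u, x) then 1 else -1) / sqrt (w i) * incidence_entry ends w r i
      = (if r = u then 1 else 0) - (if r = x then 1 else 0)"
  proof (cases "ends i = (u, x)")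
    case False
    with e have "ends i = (x, u)" "u \<noteq> x" by auto
    then show ?thesis using i(2) by (auto simp: incidence_entry_def)
  qed (use i(2) in \<open>auto simp: incidence_entry_def\<close>)
  have "(\<Sum>j\<in>J. walk_flow ends w (u # x # vs) (i # es) j * incidence_entry ends w r j)
      = (\<Sum>j\<in>J. (if j = i then (if ends i = (u, x) then 1 else -1) / sqrt (w i) else 0)
                  * incidence_entry ends w r j)
        + (\<Sum>j\<in>J. walk_flow ends w (x # vs) es j * incidence_entry ends w r j)"
    by (simp add: distrib_right sum.distrib)
  also have "\<dots> = (if r = u then 1 else 0) - (if r = x then 1 else 0)
      + ((if r = x then 1 else 0) - (if r = last (x # vs) then 1 else 0))"
    using 1 i(1) step by (simp add: if_distrib[of "\<lambda>t. t * _"] cong: if_cong)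
  finally show ?case by simp
qed (auto simp: walk_Nil_iff)

lemma walk_flow_nonzero:
  assumes "walk ends S vs es" "distinct es" "j \<in> set es" "w j > 0"
  shows "walk_flow ends w vs es j \<noteq> 0"
  using walk_flow_sq[of ends S vs es j w] assms by auto

lemma walk_flow_outside_edges: "walk ends S vs es \<Longrightarrow> j \<notin> S \<Longrightarrow> walk_flow ends w vs es j = 0"
  using walk_flow_outside walk_edges_subset by blast

lemma mult_mat_vec_sum:
  "M \<in> carrier_mat a b \<Longrightarrow> x \<in> carrier_vec b \<Longrightarrow> i < a \<Longrightarrow>
     (M *\<^sub>v x) $ i = (\<Sum>j<b. M $$ (i, j) * x $ j)"
  by (auto simp: scalar_prod_def lessThan_atLeast0 intro!: sum.cong)

locale weighted_graph =
  fixes n m :: nat and ends :: "nat \<Rightarrow> nat \<times> nat" and w :: "nat \<Rightarrow> real"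
  assumes ends_in: "\<And>i. i < m \<Longrightarrow> fst (ends i) < n \<and> snd (ends i) < n"
    and no_loops: "\<And>i. i < m \<Longrightarrow> fst (ends i) \<noteq> snd (ends i)"
    and w_pos: "\<And>i. i < m \<Longrightarrow> w i > 0"
begin

abbreviation P :: "real mat" where "P \<equiv> incidence_mat n m ends w"

lemma incidence_carrier: "P \<in> carrier_mat n m"
  by (simp add: incidence_mat_def)

lemma incidence_mult_vec_index:
  "x \<in> carrier_vec m \<Longrightarrow> r < n \<Longrightarrow> (P *\<^sub>v x) $ r = (\<Sum>j<m. incidence_entry ends w r j * x $ j)"
  by (subst mult_mat_vec_sum[OF incidence_carrier])
     (auto simp: incidence_mat_def incidence_entry_def intro!: sum.cong)

lemma incidence_pairing:
  fixes g :: "nat \<Rightarrow> real"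
  assumes x: "x \<in> carrier_vec m"
  shows "(\<Sum>r<n. g r * (P *\<^sub>v x) $ r) =
           (\<Sum>j<m. x $ j * (sqrt (w j) * (g (fst (ends j)) - g (snd (ends j)))))"
proof -
  have "(\<Sum>r<n. g r * (P *\<^sub>v x) $ r) = (\<Sum>r<n. \<Sum>j<m. x $ j * (g r * incidence_entry ends w r j))"
    using x by (simp add: incidence_mult_vec_index sum_distrib_left mult_ac)
  also have "\<dots> = (\<Sum>j<m. x $ j * (\<Sum>r<n. g r * incidence_entry ends w r j))"
    by (subst sum.swap) (simp add: sum_distrib_left)
  also have "\<dots> = (\<Sum>j<m. x $ j * (sqrt (w j) * (g (fst (ends j)) - g (snd (ends j)))))"
    using ends_in by (intro sum.cong refl) (simp add: sum_mult_incidence_entry)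
  finally show ?thesis .
qed

lemma incidence_mult_walk_flow:
  assumes wk: "walk ends T vs es" and T: "T \<subseteq> {..<m}"
  shows "P *\<^sub>v vec m (walk_flow ends w vs es) = unit_diff n (hd vs) (last vs)"
proof (rule eq_vecI)
  fix r assume "r < dim_vec (unit_diff n (hd vs) (last vs))"
  then have r: "r < n" by (simp add: unit_diff_def)
  have es: "set es \<subseteq> {..<m}" using walk_edges_subset[OF wk] T by auto
  have "(P *\<^sub>v vec m (walk_flow ends w vs es)) $ r
      = (\<Sum>j<m. walk_flow ends w vs es j * incidence_entry ends w r j)"
    using r by (simp add: incidence_mult_vec_index mult.commute)
  also have "\<dots> = (if r = hd vs then 1 else 0) - (if r = last vs then 1 else 0)"
    using es w_pos by (intro sum_walk_flow_incidence[OF wk]) auto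
  finally show "(P *\<^sub>v vec m (walk_flow ends w vs es)) $ r = unit_diff n (hd vs) (last vs) $ r"
    using r by (simp add: unit_diff_def)
qed (simp add: incidence_mat_def unit_diff_def)

lemma incidence_mult_path_flow:
  "is_path ends T u v vs es \<Longrightarrow> T \<subseteq> {..<m} \<Longrightarrow>
     P *\<^sub>v vec m (walk_flow ends w vs es) = unit_diff n u v"
  using incidence_mult_walk_flow unfolding is_path_def by blast

lemma incidence_mult_unit_vec:
  assumes i: "i < m"
  shows "P *\<^sub>v unit_vec m i = sqrt (w i) \<cdot>\<^sub>v unit_diff n (fst (ends i)) (snd (ends i))"
proof (rule eq_vecI)
  fix r assume "r < dim_vec (sqrt (w i) \<cdot>\<^sub>v unit_diff n (fst (ends i)) (snd (ends i)))"
  then have r: "r < n" by (simp add: unit_diff_def)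
  have "(P *\<^sub>v unit_vec m i) $ r = incidence_entry ends w r i"
    using r i by (simp add: incidence_mult_vec_index if_distrib[of "(*) _"] cong: if_cong)
  then show "(P *\<^sub>v unit_vec m i) $ r = (sqrt (w i) \<cdot>\<^sub>v unit_diff n (fst (ends i)) (snd (ends i))) $ r"
    using r i by (simp add: unit_diff_def incidence_entry_def)
qed (simp add: incidence_mat_def unit_diff_def)

lemma kernel_support_edge_at:
  assumes x: "x \<in> carrier_vec m" "P *\<^sub>v x = 0\<^sub>v n" and e: "e < m" "x $ e \<noteq> 0"
    and v: "v = fst (ends e) \<or> v = snd (ends e)"
  obtains j where "j < m" "j \<noteq> e" "x $ j \<noteq> 0" "v = fst (ends j) \<or> v = snd (ends j)"
proof -
  have vn: "v < n" using v ends_in[OF e(1)] by auto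
  have ve: "incidence_entry ends w v e \<noteq> 0"
    using v no_loops[OF e(1)] w_pos[OF e(1)] by (auto simp: incidence_entry_def)
  have "\<exists>j\<in>{..<m} - {e}. incidence_entry ends w v j * x $ j \<noteq> 0"
  proof (rule ccontr)
    assume "\<not> ?thesis"
    then have "(\<Sum>j<m. incidence_entry ends w v j * x $ j) = incidence_entry ends w v e * x $ e"
      using e(1) by (subst sum.remove[of _ e]) (auto intro!: sum.neutral)
    moreover have "(\<Sum>j<m. incidence_entry ends w v j * x $ j) = 0"
      using incidence_mult_vec_index[OF x(1) vn] x(2) vn by simp
    ultimately show False using ve e(2) by simp
  qed
  then obtain j where j: "j < m" "j \<noteq> e" "incidence_entry ends w v j \<noteq> 0" "x $ j \<noteq> 0" by auto
  then have "v = fst (ends j) \<or> v = snd (ends j)" by (auto simp: incidence_entry_def split: if_splits)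
  with j that show ?thesis by blast
qed

lemma longest_path_exists:
  assumes F: "F \<subseteq> {..<m}" and j: "j \<in> F"
  obtains vs es where "walk ends F vs es" "distinct vs" "es \<noteq> []"
    and "\<And>vs' es'. walk ends F vs' es' \<Longrightarrow> distinct vs' \<Longrightarrow> length vs' \<le> length vs"
proof -
  define Q where "Q = (\<lambda>(vs, es). walk ends F vs es \<and> distinct vs \<and> es \<noteq> [])"
  have "Q ([fst (ends j), snd (ends j)], [j])"
    using j F no_loops unfolding Q_def by auto
  moreover have "\<forall>p. Q p \<longrightarrow> length (fst p) < Suc n"
  proof (intro allI impI)
    fix p assume "Q p"
    then obtain vs es where p: "p = (vs, es)" "walk ends F vs es" "distinct vs" "es \<noteq> []"
      unfolding Q_def by (cases p) auto
    have "set vs \<subseteq> {..<n}" using walk_vertices_less[OF p(2,4)] F ends_in by blast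
    then show "length (fst p) < Suc n" using p(1) distinct_card[OF p(3)] card_mono[of "{..<n}" "set vs"]
      by simp
  qed
  ultimately obtain p where p: "Q p" and max: "\<And>p'. Q p' \<Longrightarrow> length (fst p') \<le> length (fst p)"
    using ex_has_greatest_nat[of Q _ "\<lambda>p. length (fst p)" "Suc n"] by blast
  obtain vs es where vs: "p = (vs, es)" by (cases p)
  have "length vs' \<le> length vs" if "walk ends F vs' es'" "distinct vs'" for vs' es'
  proof (cases "es' = []")
    case True
    then show ?thesis using that p walk_length by (fastforce simp: Q_def vs walk_Nil_iff)
  next
    case False
    then show ?thesis using that max[of "(vs', es')"] by (simp add: Q_def vs)
  qed
  with p show ?thesis using that by (auto simp: Q_def vs)
qed

text \<open>Look at the first vertex of a longest path in the support of x: its first edge carries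
  nonzero flow, so balance at that vertex yields another such edge, which either extends the path or
  closes a cycle.\<close>
lemma acyclic_supported_kernel_trivial:
  assumes S: "S \<subseteq> {..<m}" and acyc: "acyclic_on ends S" and x: "x \<in> carrier_vec m"
    and supp: "\<And>j. j < m \<Longrightarrow> j \<notin> S \<Longrightarrow> x $ j = 0" and Px: "P *\<^sub>v x = 0\<^sub>v n"
  shows "x = 0\<^sub>v m"
proof (rule ccontr)
  assume "x \<noteq> 0\<^sub>v m"
  moreover have "x = 0\<^sub>v m" if "\<forall>j<m. x $ j = 0" using x that by (intro eq_vecI) auto
  ultimately obtain j0 where j0: "j0 < m" "x $ j0 \<noteq> 0" by blast
  define F where "F = {j\<in>S. x $ j \<noteq> 0}"
  have F: "F \<subseteq> {..<m}" "F \<subseteq> S" using S by (auto simp: F_def)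
  have "j0 \<in> F" using j0 supp by (auto simp: F_def)
  then obtain vs es where wk: "walk ends F vs es" and d: "distinct vs" and ne: "es \<noteq> []"
    and longest: "\<And>vs' es'. walk ends F vs' es' \<Longrightarrow> distinct vs' \<Longrightarrow> length vs' \<le> length vs"
    using longest_path_exists[OF F(1)] by blast
  obtain v0 vs' e0 es' where vs: "vs = v0 # vs'" and es: "es = e0 # es'"
    using ne walk_length[OF wk] by (cases vs; cases es) auto
  have e0: "e0 \<in> F" "ends e0 = (v0, hd vs') \<or> ends e0 = (hd vs', v0)"
    using wk by (auto simp: vs es walk_Cons_iff)
  then have e0_m: "e0 < m" "x $ e0 \<noteq> 0" and v0: "v0 = fst (ends e0) \<or> v0 = snd (ends e0)"
    using F by (auto simp: F_def)
  obtain j where j: "j < m" "j \<noteq> e0" "x $ j \<noteq> 0" "v0 = fst (ends j) \<or> v0 = snd (ends j)"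
    using kernel_support_edge_at[OF x Px e0_m v0] by blast
  define y where "y = (if v0 = fst (ends j) then snd (ends j) else fst (ends j))"
  have jF: "j \<in> F" using j supp by (auto simp: F_def)
  have ej: "ends j = (v0, y) \<or> ends j = (y, v0)" "y \<noteq> v0"
    using j(4) no_loops[OF j(1)] by (auto simp: y_def prod_eq_iff)
  show False
  proof (cases "y \<in> set vs")
    case False
    then have "walk ends F (y # vs) (j # es)" "distinct (y # vs)"
      using wk jF ej d by (auto simp: walk_Cons_iff vs)
    then show False using longest by (metis impossible_Cons)
  next
    case True
    then obtain t where t: "t < length vs" "vs ! t = y" by (auto simp: in_set_conv_nth)
    then have "0 < t" using ej(2) vs by (cases t) auto
    then have "is_cycle ends F (vs ! t # take (Suc t) vs) (j # take t es)"
      using cycle_of_chord[OF wk d _ t(1)] jF ej j(2) t vs es by auto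
    then show False using acyc walk_mono F(2) unfolding acyclic_on_def is_cycle_def by blast
  qed
qed

text \<open>Pair P x with the indicator g of the vertices from which v can be reached inside S: the pairing
  vanishes edge by edge, and it equals g u - g v = g u - 1.\<close>
lemma path_if_supported_flow:
  assumes S: "S \<subseteq> {..<m}" and u: "u < n" and v: "v < n" and x: "x \<in> carrier_vec m"
    and supp: "\<And>j. j < m \<Longrightarrow> j \<notin> S \<Longrightarrow> x $ j = 0" and Px: "P *\<^sub>v x = unit_diff n u v"
  shows "\<exists>vs es. is_path ends S u v vs es"
proof -
  define C where "C = {a. \<exists>vs es. is_path ends S a v vs es}"
  define g :: "nat \<Rightarrow> real" where "g r = (if r \<in> C then 1 else 0)" for r
  have v_C: "v \<in> C" unfolding C_def is_path_def by (intro CollectI exI[of _ "[v]"] exI[of _ "[]"]) simp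
  have reach: "b \<in> C" if "j \<in> S" "ends j = (a, b) \<or> ends j = (b, a)" "a \<in> C" for j a b
    using that path_Cons_edge unfolding C_def by blast
  have closed: "g (fst (ends j)) = g (snd (ends j))" if "j \<in> S" for j
    using reach[OF that, of "fst (ends j)" "snd (ends j)"] reach[OF that, of "snd (ends j)" "fst (ends j)"]
    by (auto simp: g_def)
  have "g u - g v = (\<Sum>r<n. g r * (P *\<^sub>v x) $ r)"
    using sum_mult_unit_diff[OF u v] by (simp add: Px unit_diff_def)
  also have "\<dots> = (\<Sum>j<m. x $ j * (sqrt (w j) * (g (fst (ends j)) - g (snd (ends j)))))"
    by (rule incidence_pairing[OF x])
  also have "\<dots> = 0"
  proof (intro sum.neutral ballI)
    fix j assume "j \<in> {..<m}"
    then show "x $ j * (sqrt (w j) * (g (fst (ends j)) - g (snd (ends j)))) = 0"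
      using supp closed by (cases "j \<in> S") auto
  qed
  finally have "g u = 1" using v_C by (simp add: g_def)
  then show ?thesis by (auto simp: g_def C_def split: if_splits)
qed

text \<open>The flows of the two paths have the same image under P, so they are equal, and the edge set of
  a path is the support of its flow.\<close>
lemma acyclic_path_edges_unique:
  assumes S: "S \<subseteq> {..<m}" and acyc: "acyclic_on ends S"
    and p: "is_path ends S a b vs es" and p': "is_path ends S a b vs' es'"
  shows "set es = set es'"
proof -
  have wk: "walk ends S vs es" "walk ends S vs' es'"
    and h: "hd vs = a" "last vs = b" "hd vs' = a" "last vs' = b" and d: "distinct vs" "distinct vs'" using p p' unfolding is_path_def by auto
  let ?f = "walk_flow ends w vs es" and ?f' = "walk_flow ends w vs' es'"
  define x where "x = vec m ?f - vec m ?f'"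
  have xc: "x \<in> carrier_vec m" by (simp add: x_def)
  have "P *\<^sub>v x = P *\<^sub>v vec m ?f - P *\<^sub>v vec m ?f'"
    unfolding x_def by (rule mult_minus_distrib_mat_vec[OF incidence_carrier]) simp_all
  also have "\<dots> = 0\<^sub>v n"
    using incidence_mult_walk_flow[OF wk(1) S] incidence_mult_walk_flow[OF wk(2) S] h
    by (simp add: unit_diff_def)
  finally have Px: "P *\<^sub>v x = 0\<^sub>v n" .
  have "x = 0\<^sub>v m"
  proof (rule acyclic_supported_kernel_trivial[OF S acyc xc _ Px])
    fix j assume "j < m" "j \<notin> S"
    then show "x $ j = 0"
      using walk_flow_outside_edges[OF wk(1)] walk_flow_outside_edges[OF wk(2)] by (simp add: x_def)
  qed
  then have eq: "?f j = ?f' j" if "j < m" for j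
  proof -
    have "x $ j = 0" using \<open>x = 0\<^sub>v m\<close> that by simp
    then show ?thesis using that by (simp add: x_def)
  qed
  have supp: "set es = {j. j < m \<and> walk_flow ends w vs es j \<noteq> 0}"
    if "walk ends S vs es" "distinct vs" for vs es
  proof
    have "set es \<subseteq> {..<m}" using walk_edges_subset[OF that(1)] S by auto
    then show "set es \<subseteq> {j. j < m \<and> walk_flow ends w vs es j \<noteq> 0}"
      using walk_flow_nonzero[OF that(1) walk_distinct_edges[OF that]] w_pos by auto
  qed (use walk_flow_outside in blast)
  show ?thesis using supp[OF wk(1) d(1)] supp[OF wk(2) d(2)] eq by auto
qed

lemma tree_path_eq_path_edges:
  assumes S: "S \<subseteq> {..<m}" and acyc: "acyclic_on ends S" and p: "is_path ends S a b vs es"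
  shows "tree_path ends S a b = set es"
  unfolding tree_path_def
proof (rule the_equality)
  show "\<exists>vs' es'. is_path ends S a b vs' es' \<and> set es = set es'" using p by blast
qed (use acyclic_path_edges_unique[OF S acyc p] in blast)

end

section \<open>Linear algebra\<close>

definition mat_inj :: "'a :: field mat \<Rightarrow> bool" where
  "mat_inj A \<longleftrightarrow>
     (\<forall>z \<in> carrier_vec (dim_col A). A *\<^sub>v z = 0\<^sub>v (dim_row A) \<longrightarrow> z = 0\<^sub>v (dim_col A))"

lemma mat_inj_iff_det: "A \<in> carrier_mat k k \<Longrightarrow> mat_inj A \<longleftrightarrow> det A \<noteq> 0"
  unfolding mat_inj_def using det_0_iff_vec_prod_zero[of A k] by auto

text \<open>A matrix with more columns than rows is padded with zero rows to a singular square matrix.\<close>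
lemma mat_inj_dim_le:
  assumes A: "(A :: 'a :: field mat) \<in> carrier_mat a b" and inj: "mat_inj A"
  shows "b \<le> a"
proof (rule ccontr)
  assume "\<not> b \<le> a"
  then have ab: "a < b" by simp
  define A' where "A' = mat\<^sub>r b b (\<lambda>i. if i = b - 1 then 0\<^sub>v b else if i < a then row A i else 0\<^sub>v b)"
  have A': "A' \<in> carrier_mat b b" by (simp add: A'_def)
  have "det A' = 0" unfolding A'_def using ab A by (intro det_row_0) auto
  then obtain z where z: "z \<in> carrier_vec b" "z \<noteq> 0\<^sub>v b" "A' *\<^sub>v z = 0\<^sub>v b"
    using det_0_iff_vec_prod_zero[OF A'] by auto
  have "A *\<^sub>v z = 0\<^sub>v a"
  proof (rule eq_vecI)
    fix i assume "i < dim_vec (0\<^sub>v a :: 'a vec)"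
    then have i: "i < a" by simp
    have "row A' i = row A i" unfolding A'_def using i ab A by (subst row_mat_of_row_fun) auto
    then show "(A *\<^sub>v z) $ i = 0\<^sub>v a $ i"
      using z(3) i ab A A' by (metis carrier_matD index_mult_mat_vec index_zero_vec(1) less_trans)
  qed (use A in simp)
  then show False using inj z A by (auto simp: mat_inj_def)
qed

lemma mult_mat_vec_zero_right [simp]:
  "A \<in> carrier_mat a b \<Longrightarrow> A *\<^sub>v 0\<^sub>v b = (0\<^sub>v a :: 'a :: comm_ring_1 vec)"
  by (intro eq_vecI) auto

lemma mat_inj_mult_right:
  assumes A: "A \<in> carrier_mat a b" and C: "C \<in> carrier_mat b c" and inj: "mat_inj (A * C)"
  shows "mat_inj C"
  unfolding mat_inj_def
proof (intro ballI impI)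
  fix z assume z: "z \<in> carrier_vec (dim_col C)" and "C *\<^sub>v z = 0\<^sub>v (dim_row C)"
  then have "(A * C) *\<^sub>v z = 0\<^sub>v a" using A C by (simp add: assoc_mult_mat_vec)
  then show "z = 0\<^sub>v (dim_col C)" using inj z A C by (simp add: mat_inj_def)
qed

lemma mat_inj_unit_diff_cols:
  assumes D: "D \<in> carrier_mat n (n - 1)"
    and cols: "\<And>v. v < n - 1 \<Longrightarrow> col D v = unit_diff n 0 (Suc v)"
  shows "mat_inj D"
  unfolding mat_inj_def
proof (intro ballI impI)
  fix z assume z: "z \<in> carrier_vec (dim_col D)" and Dz: "D *\<^sub>v z = 0\<^sub>v (dim_row D)"
  show "z = 0\<^sub>v (dim_col D)"
  proof (rule eq_vecI)
    fix v assume "v < dim_vec (0\<^sub>v (dim_col D) :: real vec)"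
    then have v: "v < n - 1" using D by simp
    have "0 = (D *\<^sub>v z) $ Suc v" using Dz D v by simp
    also have "\<dots> = (\<Sum>v'<n - 1. D $$ (Suc v, v') * z $ v')"
      using D z v by (subst mult_mat_vec_sum) auto
    also have "\<dots> = (\<Sum>v'<n - 1. if v' = v then - z $ v' else 0)"
    proof (intro sum.cong refl)
      fix v' assume "v' \<in> {..<n - 1}"
      then have "D $$ (Suc v, v') = col D v' $ Suc v" using D v by simp
      then show "D $$ (Suc v, v') * z $ v' = (if v' = v then - z $ v' else 0)"
        using cols \<open>v' \<in> {..<n - 1}\<close> v by (simp add: unit_diff_def)
    qed
    also have "\<dots> = - z $ v" using v by simp
    finally show "z $ v = 0\<^sub>v (dim_col D) $ v" using v D by simp
  qed (use z D in simp)
qed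

lemma inj_product_if_differences_in_range:
  assumes Q: "Q \<in> carrier_mat n (n - 1)" and K: "K \<in> carrier_mat (n - 1) k"
    and range: "\<And>v. v < n - 1 \<Longrightarrow> \<exists>c \<in> carrier_vec k. Q *\<^sub>v (K *\<^sub>v c) = unit_diff n 0 (Suc v)"
  obtains C where "C \<in> carrier_mat k (n - 1)" "mat_inj (Q * (K * C))"
proof -
  obtain c where c: "\<And>v. v < n - 1 \<Longrightarrow> c v \<in> carrier_vec k \<and> Q *\<^sub>v (K *\<^sub>v c v) = unit_diff n 0 (Suc v)"
    using range by metis
  define C where "C = mat k (n - 1) (\<lambda>(j, v). c v $ j)"
  have C: "C \<in> carrier_mat k (n - 1)" by (simp add: C_def)
  have "col (Q * (K * C)) v = unit_diff n 0 (Suc v)" if v: "v < n - 1" for v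
  proof -
    have "col C v = c v" using c[OF v] v by (auto simp: C_def)
    moreover have "col (Q * (K * C)) v = Q *\<^sub>v (K *\<^sub>v col C v)"
      using col_mult2[OF Q mult_carrier_mat[OF K C] v] col_mult2[OF K C v] by simp
    ultimately show ?thesis using c[OF v] by simp
  qed
  then have "mat_inj (Q * (K * C))" using Q K C by (intro mat_inj_unit_diff_cols) auto
  then show ?thesis using that C by blast
qed

lemma mat_inv_if_det_nonzero:
  assumes A: "(A :: real mat) \<in> carrier_mat k k" and d: "det A \<noteq> 0"
  shows "mat_inv A \<in> carrier_mat k k" "A * mat_inv A = 1\<^sub>m k" "mat_inv A * A = 1\<^sub>m k"
proof -
  obtain B where "B \<in> carrier_mat k k" "A * B = 1\<^sub>m k" "B * A = 1\<^sub>m k"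
    using det_non_zero_imp_unit[OF A d, of undefined] unfolding Units_def ring_mat_def by auto
  then have "inverts_mat A B \<and> inverts_mat B A" using A by (simp add: inverts_mat_def)
  then have h: "inverts_mat A (mat_inv A) \<and> inverts_mat (mat_inv A) A"
    unfolding mat_inv_def by (rule someI)
  then have AB: "A * mat_inv A = 1\<^sub>m k" and BA: "mat_inv A * A = 1\<^sub>m (dim_row (mat_inv A))"
    using A by (auto simp: inverts_mat_def)
  have "dim_col (mat_inv A) = k" using arg_cong[OF AB, of dim_col] by simp
  moreover have "dim_row (mat_inv A) = k" using arg_cong[OF BA, of dim_col] A by simp
  ultimately show "mat_inv A \<in> carrier_mat k k" "A * mat_inv A = 1\<^sub>m k" "mat_inv A * A = 1\<^sub>m k"
    using AB BA by auto
qed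

lemma frob_sq_eq_sum_diag: "frob_sq (A :: real mat) = (\<Sum>i<dim_row A. (A * transpose_mat A) $$ (i, i))"
  unfolding frob_sq_def
  by (intro sum.cong refl) (auto simp: scalar_prod_def power2_eq_square lessThan_atLeast0)

lemma frob_sq_mult_coisometry:
  assumes B: "(B :: real mat) \<in> carrier_mat a b" and Y: "Y \<in> carrier_mat b m"
    and YY: "Y * transpose_mat Y = 1\<^sub>m b"
  shows "frob_sq (B * Y) = frob_sq B"
proof -
  have Bt: "transpose_mat B \<in> carrier_mat b a" using B by simp
  have "Y * (transpose_mat Y * transpose_mat B) = (Y * transpose_mat Y) * transpose_mat B"
    by (rule assoc_mult_mat[symmetric, OF Y _ Bt]) (use Y in simp)
  also have "\<dots> = transpose_mat B" using YY Bt by simp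
  finally have YB: "Y * (transpose_mat Y * transpose_mat B) = transpose_mat B" .
  have "transpose_mat Y * transpose_mat B \<in> carrier_mat m a" using Y Bt by simp
  then have "(B * Y) * transpose_mat (B * Y) = B * transpose_mat B"
    using YB by (simp add: transpose_mult[OF B Y] assoc_mult_mat[OF B Y])
  then show ?thesis using B Y by (simp add: frob_sq_eq_sum_diag)
qed

section \<open>Column submatrices\<close>

lemma pick_lessThan: "i < a \<Longrightarrow> pick {..<a} i = i"
proof (induction i)
  case (Suc i)
  then have "pick {..<a} (Suc i) = (LEAST x. x \<in> {..<a} \<and> x > i)" by simp
  also have "\<dots> = Suc i" using Suc.prems by (intro Least_equality) auto
  finally show ?case .
qed (auto intro!: Least_equality)

lemma card_less_less_card: "finite S \<Longrightarrow> (j :: nat) \<in> S \<Longrightarrow> card {a\<in>S. a < j} < card S"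
  by (rule psubset_card_mono) auto

lemma bij_betw_pick:
  assumes S: "finite S"
  shows "bij_betw (pick S) {..<card S} S"
proof (rule bij_betw_imageI)
  show "inj_on (pick S) {..<card S}"
  proof (rule inj_onI)
    fix a b assume "a \<in> {..<card S}" "b \<in> {..<card S}" "pick S a = pick S b"
    then show "a = b" using pick_mono[of a S b] pick_mono[of b S a] by (cases a b rule: linorder_cases) auto
  qed
  show "pick S ` {..<card S} = S"
  proof (intro equalityI subsetI)
    fix j assume "j \<in> pick S ` {..<card S}"
    then show "j \<in> S" using pick_in_set by auto
  next
    fix j assume "j \<in> S"
    then have "j = pick S (card {a\<in>S. a < j})" "card {a\<in>S. a < j} < card S"
      using pick_card_in_set card_less_less_card[OF S] by auto
    then show "j \<in> pick S ` {..<card S}" by blast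
  qed
qed

lemma col_submat_carrier:
  assumes "M \<in> carrier_mat a m" "S \<subseteq> {..<m}"
  shows "col_submat M S \<in> carrier_mat a (card S)"
proof -
  have "{j. j < m \<and> j \<in> S} = S" "{i. i < a \<and> i \<in> {..<a}} = {..<a}" using assms by auto
  then show ?thesis using assms unfolding col_submat_def by (auto simp: dim_submatrix)
qed

lemma col_submat_index:
  assumes "M \<in> carrier_mat a m" "S \<subseteq> {..<m}" "i < a" "r < card S"
  shows "col_submat M S $$ (i, r) = M $$ (i, pick S r)"
proof -
  have "{j. j < m \<and> j \<in> S} = S" "{i. i < a \<and> i \<in> {..<a}} = {..<a}" using assms by auto
  then show ?thesis using assms pick_lessThan[of i a] unfolding col_submat_def
    by (subst submatrix_index) auto
qed

lemma mult_vec_supported_col_submat: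
  assumes M: "M \<in> carrier_mat a m" and S: "S \<subseteq> {..<m}"
    and supp: "\<And>j. j < m \<Longrightarrow> j \<notin> S \<Longrightarrow> c j = 0"
  shows "M *\<^sub>v vec m c = col_submat M S *\<^sub>v vec (card S) (\<lambda>r. c (pick S r))"
proof (rule eq_vecI)
  have fS: "finite S" using S finite_subset by blast
  have C: "col_submat M S \<in> carrier_mat a (card S)" using col_submat_carrier[OF M S] .
  fix i assume "i < dim_vec (col_submat M S *\<^sub>v vec (card S) (\<lambda>r. c (pick S r)))"
  then have i: "i < a" using C by simp
  have "(M *\<^sub>v vec m c) $ i = (\<Sum>j<m. M $$ (i, j) * c j)"
    using M i by (subst mult_mat_vec_sum[OF M]) auto
  also have "\<dots> = (\<Sum>j\<in>S. M $$ (i, j) * c j)"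
    using S supp by (intro sum.mono_neutral_right) force+
  also have "\<dots> = (\<Sum>r<card S. M $$ (i, pick S r) * c (pick S r))"
    using sum.reindex_bij_betw[OF bij_betw_pick[OF fS], of "\<lambda>j. M $$ (i, j) * c j"] by simp
  also have "\<dots> = (col_submat M S *\<^sub>v vec (card S) (\<lambda>r. c (pick S r))) $ i"
    using C i col_submat_index[OF M S i] by (subst mult_mat_vec_sum[OF C]) auto
  finally show "(M *\<^sub>v vec m c) $ i = (col_submat M S *\<^sub>v vec (card S) (\<lambda>r. c (pick S r))) $ i" .
qed (use M col_submat_carrier[OF M S] in simp)

text \<open>Inverse of restricting to the columns S: entry r of z is placed at position pick S r.\<close>
definition spread :: "nat \<Rightarrow> nat set \<Rightarrow> real vec \<Rightarrow> real vec" where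
  "spread m S z = vec m (\<lambda>j. if j \<in> S then z $ card {a\<in>S. a < j} else 0)"

lemma spread_carrier [simp]: "spread m S z \<in> carrier_vec m"
  by (simp add: spread_def)

lemma spread_pick: "S \<subseteq> {..<m} \<Longrightarrow> r < card S \<Longrightarrow> spread m S z $ pick S r = z $ r"
  using pick_in_set[of r S] card_pick[of r S] by (auto simp: spread_def)

lemma mult_spread:
  assumes M: "M \<in> carrier_mat a m" and S: "S \<subseteq> {..<m}" and z: "z \<in> carrier_vec (card S)"
  shows "M *\<^sub>v spread m S z = col_submat M S *\<^sub>v z"
proof -
  have "vec (card S) (\<lambda>r. if pick S r \<in> S then z $ card {a\<in>S. a < pick S r} else 0) = z"
    using z pick_in_set card_pick by (intro eq_vecI) auto
  then show ?thesis
    using mult_vec_supported_col_submat[OF M S, of "\<lambda>j. if j \<in> S then z $ card {a\<in>S. a < j} else 0"]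
    by (simp add: spread_def)
qed

section \<open>The right singular vectors of the incidence matrix\<close>

locale incidence_svd = weighted_graph +
  fixes U Sig V :: "real mat"
  assumes n_pos: "n \<ge> 1"
    and conn: "connected_on n ends {..<m}"
    and svd: "thin_svd (incidence_mat n m ends w) (n - 1) U Sig V"
begin

abbreviation Y :: "real mat" where "Y \<equiv> transpose_mat V"

lemma svd_carrier: "U \<in> carrier_mat n (n - 1)" "Sig \<in> carrier_mat (n - 1) (n - 1)" "Y \<in> carrier_mat (n - 1) m"
  and U_orthonormal: "transpose_mat U * U = 1\<^sub>m (n - 1)"
  and Y_orthonormal: "Y * transpose_mat Y = 1\<^sub>m (n - 1)"
  and incidence_eq_svd: "P = U * Sig * Y"
proof -
  have "dim_row P = n" "dim_col P = m" by (simp_all add: incidence_mat_def)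
  with svd show "U \<in> carrier_mat n (n - 1)" "Sig \<in> carrier_mat (n - 1) (n - 1)"
    "Y \<in> carrier_mat (n - 1) m" "transpose_mat U * U = 1\<^sub>m (n - 1)"
    "Y * transpose_mat Y = 1\<^sub>m (n - 1)" "P = U * Sig * Y"
    unfolding thin_svd_def by auto
qed

lemma incidence_mult_vec_svd:
  assumes x: "x \<in> carrier_vec m"
  shows "P *\<^sub>v x = U *\<^sub>v (Sig *\<^sub>v (Y *\<^sub>v x))"
proof -
  have "P *\<^sub>v x = (U * Sig) *\<^sub>v (Y *\<^sub>v x)"
    unfolding incidence_eq_svd using svd_carrier x by (intro assoc_mult_mat_vec) auto
  also have "\<dots> = U *\<^sub>v (Sig *\<^sub>v (Y *\<^sub>v x))"
    using svd_carrier x by (intro assoc_mult_mat_vec) auto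
  finally show ?thesis .
qed

lemma Y_mult_supported_flow:
  assumes S: "S \<subseteq> {..<m}" and wk: "walk ends S vs es"
  shows "Y *\<^sub>v vec m (walk_flow ends w vs es)
           = col_submat Y S *\<^sub>v vec (card S) (\<lambda>r. walk_flow ends w vs es (pick S r))"
  using mult_vec_supported_col_submat[OF svd_carrier(3) S] walk_flow_outside_edges[OF wk] by blast

lemma differences_in_range_of_col_submat:
  assumes S: "S \<subseteq> {..<m}" and cS: "connected_on n ends S" and v: "v < n - 1"
  shows "\<exists>c \<in> carrier_vec (card S). (U * Sig) *\<^sub>v (col_submat Y S *\<^sub>v c) = unit_diff n 0 (Suc v)"
proof -
  have "0 < n" "Suc v < n" using v n_pos by auto
  then obtain vs es where p: "is_path ends S 0 (Suc v) vs es" using cS unfolding connected_on_def by blast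
  let ?c = "vec (card S) (\<lambda>r. walk_flow ends w vs es (pick S r))"
  have "(U * Sig) *\<^sub>v (col_submat Y S *\<^sub>v ?c) = U *\<^sub>v (Sig *\<^sub>v (Y *\<^sub>v vec m (walk_flow ends w vs es)))"
    using svd_carrier col_submat_carrier[OF svd_carrier(3) S] p
    by (simp add: Y_mult_supported_flow[OF S] is_path_def assoc_mult_mat_vec[of _ n "n - 1"])
  also have "\<dots> = unit_diff n 0 (Suc v)"
    using incidence_mult_path_flow[OF p S] by (simp add: incidence_mult_vec_svd)
  finally show ?thesis by (intro bexI[of _ ?c]) auto
qed

lemma col_submat_lessThan: "col_submat Y {..<m} = Y"
proof -
  have "col_submat Y {..<m} \<in> carrier_mat (n - 1) m"
    using col_submat_carrier[OF svd_carrier(3), of "{..<m}"] by simp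
  then show ?thesis using svd_carrier(3) pick_lessThan
    by (intro eq_matI) (auto simp: col_submat_index)
qed

text \<open>Walk flows in G map onto all e_0 - e_(v+1), so P = U Sig Y has rank n - 1.\<close>
lemma det_Sig_nonzero: "det Sig \<noteq> 0"
proof -
  have Y: "col_submat Y {..<m} \<in> carrier_mat (n - 1) m" using svd_carrier by (simp add: col_submat_lessThan)
  have US: "U * Sig \<in> carrier_mat n (n - 1)" using svd_carrier by simp
  obtain C where C: "C \<in> carrier_mat m (n - 1)" and inj: "mat_inj ((U * Sig) * (Y * C))"
    using inj_product_if_differences_in_range[OF US Y] differences_in_range_of_col_submat[OF _ conn]
    by (auto simp: col_submat_lessThan)
  have YC: "Y * C \<in> carrier_mat (n - 1) (n - 1)" using svd_carrier C by simp
  have SYC: "Sig * (Y * C) \<in> carrier_mat (n - 1) (n - 1)" using svd_carrier YC by simp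
  have "(U * Sig) * (Y * C) = U * (Sig * (Y * C))" using svd_carrier YC by simp
  then have "mat_inj (Sig * (Y * C))" using inj mat_inj_mult_right[OF svd_carrier(1) SYC] by simp
  then have "det (Sig * (Y * C)) \<noteq> 0" using mat_inj_iff_det[OF SYC] by simp
  then show ?thesis using det_mult[OF svd_carrier(2) YC] by auto
qed

lemma Y_kernel_if_incidence_kernel:
  assumes x: "x \<in> carrier_vec m" and Px: "P *\<^sub>v x = 0\<^sub>v n"
  shows "Y *\<^sub>v x = 0\<^sub>v (n - 1)"
proof -
  have U: "mat_inj U" unfolding mat_inj_def
  proof (intro ballI impI)
    fix z assume z: "z \<in> carrier_vec (dim_col U)" and "U *\<^sub>v z = 0\<^sub>v (dim_row U)"
    then have "(transpose_mat U * U) *\<^sub>v z = 0\<^sub>v (n - 1)"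
      using svd_carrier by (simp add: assoc_mult_mat_vec[of _ "n - 1" n])
    then show "z = 0\<^sub>v (dim_col U)" using z svd_carrier by (simp add: U_orthonormal)
  qed
  have Sig: "mat_inj Sig" using det_Sig_nonzero svd_carrier by (simp add: mat_inj_iff_det)
  have "U *\<^sub>v (Sig *\<^sub>v (Y *\<^sub>v x)) = 0\<^sub>v n" using Px x by (simp add: incidence_mult_vec_svd)
  then have "Sig *\<^sub>v (Y *\<^sub>v x) = 0\<^sub>v (n - 1)" using U x svd_carrier by (simp add: mat_inj_def)
  then show ?thesis using Sig x svd_carrier by (simp add: mat_inj_def)
qed

lemma Y_eq_if_incidence_eq:
  assumes x: "x \<in> carrier_vec m" and x': "x' \<in> carrier_vec m" and eq: "P *\<^sub>v x = P *\<^sub>v x'"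
  shows "Y *\<^sub>v x = Y *\<^sub>v x'"
proof -
  have "P *\<^sub>v (x - x') = 0\<^sub>v n"
    using eq x x' incidence_carrier by (simp add: mult_minus_distrib_mat_vec)
  then have diff: "Y *\<^sub>v x - Y *\<^sub>v x' = 0\<^sub>v (n - 1)"
    using Y_kernel_if_incidence_kernel[of "x - x'"] x x' svd_carrier by (simp add: mult_minus_distrib_mat_vec)
  show ?thesis
  proof (rule eq_vecI)
    fix i assume i: "i < dim_vec (Y *\<^sub>v x')"
    then have "(Y *\<^sub>v x - Y *\<^sub>v x') $ i = 0" using diff svd_carrier by simp
    then show "(Y *\<^sub>v x) $ i = (Y *\<^sub>v x') $ i" using i by simp
  qed (use svd_carrier in simp)
qed

lemma col_submat_inj_if_acyclic:
  assumes S: "S \<subseteq> {..<m}" and acyc: "acyclic_on ends S"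
  shows "mat_inj (col_submat Y S)"
  unfolding mat_inj_def
proof (intro ballI impI)
  have A: "col_submat Y S \<in> carrier_mat (n - 1) (card S)" by (rule col_submat_carrier[OF svd_carrier(3) S])
  fix z assume z: "z \<in> carrier_vec (dim_col (col_submat Y S))"
    and Az: "col_submat Y S *\<^sub>v z = 0\<^sub>v (dim_row (col_submat Y S))"
  then have "P *\<^sub>v spread m S z = 0\<^sub>v n"
    using A svd_carrier by (simp add: incidence_mult_vec_svd mult_spread[OF svd_carrier(3) S])
  then have spread_0: "spread m S z = 0\<^sub>v m"
    by (intro acyclic_supported_kernel_trivial[OF S acyc]) (auto simp: spread_def)
  show "z = 0\<^sub>v (dim_col (col_submat Y S))"
  proof (rule eq_vecI)
    fix r assume "r < dim_vec (0\<^sub>v (dim_col (col_submat Y S)) :: real vec)"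
    then have r: "r < card S" using A by simp
    then have "pick S r < m" using pick_in_set[of r S] S by auto
    then show "z $ r = 0\<^sub>v (dim_col (col_submat Y S)) $ r"
      using spread_pick[OF S r, of z] r A by (simp add: spread_0)
  qed (use z A in simp)
qed

text \<open>A cycle carries a nonzero flow that P, hence Y, annihilates.\<close>
lemma acyclic_if_col_submat_inj:
  assumes S: "S \<subseteq> {..<m}" and inj: "mat_inj (col_submat Y S)"
  shows "acyclic_on ends S"
  unfolding acyclic_on_def
proof
  assume "\<exists>vs es. is_cycle ends S vs es"
  then obtain vs es where wk: "walk ends S vs es" and ne: "es \<noteq> []" and hl: "hd vs = last vs"
    and d: "distinct es" unfolding is_cycle_def by blast
  let ?f = "walk_flow ends w vs es"
  let ?c = "vec (card S) (\<lambda>r. ?f (pick S r))"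
  have A: "col_submat Y S \<in> carrier_mat (n - 1) (card S)" by (rule col_submat_carrier[OF svd_carrier(3) S])
  have "P *\<^sub>v vec m ?f = 0\<^sub>v n"
    using incidence_mult_walk_flow[OF wk S] hl by (auto simp: unit_diff_def)
  then have "col_submat Y S *\<^sub>v ?c = 0\<^sub>v (n - 1)"
    using Y_kernel_if_incidence_kernel[of "vec m ?f"] Y_mult_supported_flow[OF S wk] by simp
  then have c0: "?c = 0\<^sub>v (card S)" using inj A by (simp add: mat_inj_def)
  define j where "j = hd es"
  have j: "j \<in> set es" "j \<in> S" using ne walk_edges_subset[OF wk] by (auto simp: j_def)
  have fS: "finite S" using S finite_subset by blast
  have "?c $ card {a\<in>S. a < j} = ?f j"
    using card_less_less_card[OF fS j(2)] pick_card_in_set[OF j(2)] by simp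
  then have "?f j = 0" using c0 card_less_less_card[OF fS j(2)] by simp
  moreover have "w j > 0" using j S w_pos by auto
  ultimately show False using walk_flow_nonzero[OF wk d j(1)] by simp
qed

lemma spanning_tree_card:
  assumes T: "is_spanning_tree n m ends S"
  shows "card S = n - 1"
proof -
  have S: "S \<subseteq> {..<m}" and cS: "connected_on n ends S" and acyc: "acyclic_on ends S"
    using T unfolding is_spanning_tree_def by auto
  have A: "col_submat Y S \<in> carrier_mat (n - 1) (card S)" by (rule col_submat_carrier[OF svd_carrier(3) S])
  have US: "U * Sig \<in> carrier_mat n (n - 1)" using svd_carrier by simp
  obtain C where C: "C \<in> carrier_mat (card S) (n - 1)" and inj: "mat_inj ((U * Sig) * (col_submat Y S * C))"
    using inj_product_if_differences_in_range[OF US A] differences_in_range_of_col_submat[OF S cS] by blast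
  have "mat_inj C"
    using mat_inj_mult_right[OF A C mat_inj_mult_right[OF US mult_carrier_mat[OF A C] inj]] .
  then have "n - 1 \<le> card S" by (rule mat_inj_dim_le[OF C])
  moreover have "card S \<le> n - 1" by (rule mat_inj_dim_le[OF A col_submat_inj_if_acyclic[OF S acyc]])
  ultimately show ?thesis by simp
qed

lemma spanning_tree_col_submat:
  assumes T: "is_spanning_tree n m ends S"
  shows "col_submat Y S \<in> carrier_mat (n - 1) (n - 1)" "det (col_submat Y S) \<noteq> 0"
proof -
  have S: "S \<subseteq> {..<m}" and acyc: "acyclic_on ends S" using T unfolding is_spanning_tree_def by auto
  show A: "col_submat Y S \<in> carrier_mat (n - 1) (n - 1)"
    using col_submat_carrier[OF svd_carrier(3) S] spanning_tree_card[OF T] by simp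
  show "det (col_submat Y S) \<noteq> 0"
    using col_submat_inj_if_acyclic[OF S acyc] mat_inj_iff_det[OF A] by simp
qed

text \<open>Edge i and the tree path between its endpoints have proportional images under P, hence
  under Y.\<close>
lemma col_tree_inverse_mult_Y:
  assumes T: "is_spanning_tree n m ends S" and B: "B \<in> carrier_mat (n - 1) (n - 1)"
    and BA: "B * col_submat Y S = 1\<^sub>m (n - 1)" and i: "i < m"
    and p: "is_path ends S (fst (ends i)) (snd (ends i)) vs es"
  shows "col (B * Y) i = sqrt (w i) \<cdot>\<^sub>v vec (n - 1) (\<lambda>r. walk_flow ends w vs es (pick S r))"
proof -
  have S: "S \<subseteq> {..<m}" using T unfolding is_spanning_tree_def by auto
  have A: "col_submat Y S \<in> carrier_mat (n - 1) (n - 1)" using spanning_tree_col_submat[OF T] by simp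
  have wk: "walk ends S vs es" using p unfolding is_path_def by simp
  let ?f = "vec m (walk_flow ends w vs es)"
  let ?c = "vec (n - 1) (\<lambda>r. walk_flow ends w vs es (pick S r))"
  have col_Y: "col Y i = Y *\<^sub>v unit_vec m i"
    using svd_carrier i by (intro eq_vecI) auto
  have "P *\<^sub>v unit_vec m i = P *\<^sub>v (sqrt (w i) \<cdot>\<^sub>v ?f)"
    using incidence_mult_unit_vec[OF i] incidence_mult_path_flow[OF p S]
      mult_mat_vec[OF incidence_carrier, of ?f] by simp
  then have "col Y i = Y *\<^sub>v (sqrt (w i) \<cdot>\<^sub>v ?f)"
    unfolding col_Y by (intro Y_eq_if_incidence_eq) simp_all
  also have "\<dots> = sqrt (w i) \<cdot>\<^sub>v (col_submat Y S *\<^sub>v ?c)"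
    using mult_mat_vec[OF svd_carrier(3), of ?f] Y_mult_supported_flow[OF S wk] spanning_tree_card[OF T]
    by simp
  also have "\<dots> = col_submat Y S *\<^sub>v (sqrt (w i) \<cdot>\<^sub>v ?c)"
    using mult_mat_vec[OF A, of ?c] by simp
  finally have col_Y_path: "col Y i = col_submat Y S *\<^sub>v (sqrt (w i) \<cdot>\<^sub>v ?c)" .
  have "col (B * Y) i = B *\<^sub>v col Y i" by (rule col_mult2[OF B svd_carrier(3) i])
  also have "\<dots> = (B * col_submat Y S) *\<^sub>v (sqrt (w i) \<cdot>\<^sub>v ?c)"
    unfolding col_Y_path by (rule assoc_mult_mat_vec[OF B A, symmetric]) simp
  finally show ?thesis using BA by simp
qed

lemma col_tree_inverse_mult_Y_sq:
  assumes T: "is_spanning_tree n m ends S" and B: "B \<in> carrier_mat (n - 1) (n - 1)"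
    and BA: "B * col_submat Y S = 1\<^sub>m (n - 1)" and i: "i < m"
  shows "(\<Sum>r<n - 1. ((B * Y) $$ (r, i))\<^sup>2) = stretch_edge ends w S i"
proof -
  have S: "S \<subseteq> {..<m}" and cS: "connected_on n ends S" and acyc: "acyclic_on ends S"
    using T unfolding is_spanning_tree_def by auto
  have k: "card S = n - 1" using spanning_tree_card[OF T] .
  have fS: "finite S" using S finite_subset by blast
  obtain vs es where p: "is_path ends S (fst (ends i)) (snd (ends i)) vs es"
    using cS ends_in[OF i] unfolding connected_on_def by blast
  have wk: "walk ends S vs es" and de: "distinct es"
    using p walk_distinct_edges unfolding is_path_def by auto
  let ?f = "walk_flow ends w vs es"
  have "(\<Sum>r<n - 1. ((B * Y) $$ (r, i))\<^sup>2) = (\<Sum>r<n - 1. w i * (?f (pick S r))\<^sup>2)"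
  proof (intro sum.cong refl)
    fix r assume r: "r \<in> {..<n - 1}"
    have "(B * Y) $$ (r, i) = col (B * Y) i $ r" using B svd_carrier r i by simp
    then show "((B * Y) $$ (r, i))\<^sup>2 = w i * (?f (pick S r))\<^sup>2"
      using col_tree_inverse_mult_Y[OF T B BA i p] r w_pos[OF i] by (simp add: power_mult_distrib)
  qed
  also have "\<dots> = (\<Sum>j\<in>S. w i * (?f j)\<^sup>2)"
    using sum.reindex_bij_betw[OF bij_betw_pick[OF fS], of "\<lambda>j. w i * (?f j)\<^sup>2"] k by simp
  also have "\<dots> = (\<Sum>j\<in>set es. w i * (?f j)\<^sup>2)"
    using walk_edges_subset[OF wk] fS walk_flow_outside by (intro sum.mono_neutral_right) auto
  also have "\<dots> = (\<Sum>j\<in>set es. w i / w j)"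
  proof (rule sum.cong[OF refl])
    fix j assume j: "j \<in> set es"
    then have "w j > 0" using walk_edges_subset[OF wk] S w_pos by auto
    then show "w i * (?f j)\<^sup>2 = w i / w j" using walk_flow_sq[OF wk de j] by simp
  qed
  also have "\<dots> = stretch_edge ends w S i"
    unfolding stretch_edge_def tree_path_eq_path_edges[OF S acyc p] ..
  finally show ?thesis .
qed

lemma stretch_eq_frob_sq_inverse:
  assumes T: "is_spanning_tree n m ends S"
  shows "invertible_mat (col_submat Y S) \<and> stretch m ends w S = frob_sq (mat_inv (col_submat Y S))"
proof -
  let ?A = "col_submat Y S" and ?B = "mat_inv (col_submat Y S)"
  have A: "?A \<in> carrier_mat (n - 1) (n - 1)" and d: "det ?A \<noteq> 0"
    using spanning_tree_col_submat[OF T] by auto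
  note B = mat_inv_if_det_nonzero[OF A d]
  have "invertible_mat ?A"
    using A B unfolding invertible_mat_def inverts_mat_def square_mat.simps by auto
  moreover have "frob_sq ?B = stretch m ends w S"
  proof -
    have dims: "dim_row (?B * Y) = n - 1" "dim_col (?B * Y) = m" using B(1) svd_carrier by auto
    have "frob_sq ?B = frob_sq (?B * Y)"
      using frob_sq_mult_coisometry[OF B(1) svd_carrier(3) Y_orthonormal] by simp
    also have "\<dots> = (\<Sum>i<m. \<Sum>r<n - 1. ((?B * Y) $$ (r, i))\<^sup>2)"
      unfolding frob_sq_def dims by (rule sum.swap)
    also have "\<dots> = stretch m ends w S"
      unfolding stretch_def using col_tree_inverse_mult_Y_sq[OF T B(1,3)] by simp
    finally show ?thesis .
  qed
  ultimately show ?thesis by simp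
qed

text \<open>Any flow of G from u to v is matched, under Y and hence under P, by a flow supported on S.\<close>
lemma connected_if_col_submat_invertible:
  assumes S: "S \<subseteq> {..<m}" and k: "card S = n - 1" and d: "det (col_submat Y S) \<noteq> 0"
  shows "connected_on n ends S"
  unfolding connected_on_def
proof (intro allI impI)
  fix u v assume u: "u < n" and v: "v < n"
  have A: "col_submat Y S \<in> carrier_mat (n - 1) (n - 1)"
    using col_submat_carrier[OF svd_carrier(3) S] k by simp
  note B = mat_inv_if_det_nonzero[OF A d]
  obtain vs es where "is_path ends {..<m} u v vs es" using conn u v unfolding connected_on_def by blast
  then have Pf: "P *\<^sub>v vec m (walk_flow ends w vs es) = unit_diff n u v"
    by (rule incidence_mult_path_flow) simp
  define z where "z = mat_inv (col_submat Y S) *\<^sub>v (Y *\<^sub>v vec m (walk_flow ends w vs es))"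
  have z: "z \<in> carrier_vec (card S)" using B(1) svd_carrier k by (simp add: z_def)
  have "Y *\<^sub>v spread m S z = Y *\<^sub>v vec m (walk_flow ends w vs es)"
    using mult_spread[OF svd_carrier(3) S z] B svd_carrier
    by (simp add: z_def assoc_mult_mat_vec[OF A B(1), symmetric])
  then have "P *\<^sub>v spread m S z = unit_diff n u v"
    using Pf by (simp add: incidence_mult_vec_svd)
  then show "\<exists>vs es. is_path ends S u v vs es"
    by (intro path_if_supported_flow[OF S u v spread_carrier]) (auto simp: spread_def)
qed

lemma spanning_tree_if_full_rank:
  assumes S: "S \<subseteq> {..<m}" and k: "card S = n - 1"
    and rk: "vec_space.rank (n - 1) (col_submat Y S) = n - 1"
  shows "is_spanning_tree n m ends S"
proof -
  have A: "col_submat Y S \<in> carrier_mat (n - 1) (n - 1)"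
    using col_submat_carrier[OF svd_carrier(3) S] k by simp
  then have d: "det (col_submat Y S) \<noteq> 0" using vec_space.det_rank_iff rk by blast
  then have "acyclic_on ends S" using acyclic_if_col_submat_inj[OF S] mat_inj_iff_det[OF A] by blast
  then show ?thesis
    using S connected_if_col_submat_invertible[OF S k d] unfolding is_spanning_tree_def by blast
qed

end

theorem theorem5p1:
  fixes n m :: nat and ends :: "nat \<Rightarrow> nat \<times> nat" and w :: "nat \<Rightarrow> real"
    and U Sig V :: "real mat"
  assumes n_pos: "n \<ge> 1"
    and ends_in: "\<And>i. i < m \<Longrightarrow> fst (ends i) < n \<and> snd (ends i) < n"
    and no_loops: "\<And>i. i < m \<Longrightarrow> fst (ends i) \<noteq> snd (ends i)"
    and simple: "\<And>i j. i < m \<Longrightarrow> j < m \<Longrightarrow> i \<noteq> j \<Longrightarrow>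
                   ends i \<noteq> ends j \<and> ends i \<noteq> prod.swap (ends j)"
    and w_pos: "\<And>i. i < m \<Longrightarrow> w i > 0"
    and conn: "connected_on n ends {..<m}"
    and svd: "thin_svd (incidence_mat n m ends w) (n - 1) U Sig V"
  shows "(\<forall>S. is_spanning_tree n m ends S \<longrightarrow>
            invertible_mat (col_submat (transpose_mat V) S) \<and>
            stretch m ends w S = frob_sq (mat_inv (col_submat (transpose_mat V) S)))
       \<and> (\<forall>S. S \<subseteq> {..<m} \<and> card S = n - 1 \<and>
            vec_space.rank (n - 1) (col_submat (transpose_mat V) S) = n - 1
            \<longrightarrow> is_spanning_tree n m ends S)"
proof -
  interpret incidence_svd n m ends w U Sig V
    using n_pos ends_in no_loops w_pos conn svd by unfold_locales auto
  show ?thesis using stretch_eq_frob_sq_inverse spanning_tree_if_full_rank by blast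
qed

end
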